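(* Let $\mathcal G$ be a principal, ubiquitously fiberwise amenable groupoid (standing conventions). Then for every compact $K\subseteq\mathcal G$ and every $\epsilon>0$ there exists a normal $(K,\epsilon)$-Følner set in $\mathcal G$.
   Context: Standing conventions: a groupoid is a $\sigma$-compact, locally compact, Hausdorff, étale, ample groupoid $\mathcal G$ with compact unit space $\mathcal G^{(0)}$. Principal: the only $g$ with $s(g)=r(g)$ are units. For $A,B\subseteq\mathcal G$, $AB$ denotes composable products and $Au=\{a\in A:s(a)=u\}$. A multisection is a finite family $\{C_{i,j}:i,j\in F\}$ of bisections with $C_{i,j}C_{j,k}=C_{i,k}$ and pairwise disjoint levels $C_{i,i}\subseteq\mathcal G^{(0)}$. A finite nonempty $F\subseteq\mathcal G$ is $(K,\epsilon)$-Følner if $|KF\setminus F|\le\epsilon|F|$. $\mathcal G$ is ubiquitously fiberwise amenable if for every compact $K$ and $\epsilon>0$ there is compact $L$ such that every $u\in\mathcal G^{(0)}$ admits a $(K,\epsilon)$-Følner set contained in $Lu\cup\{u\}$. A normal set is a compact open $S\subseteq\mathcal G$ together with compact open multisections $\{C^l_{i,j}:i,j\in F_l\}$, $l=1,\dots,m$, and indices $i_l\in F_l$ with $S=\bigcup_{l=1}^m\bigsqcup_{i\in F_l}C^l_{i,i_l}$ and $\mathcal G^{(0)}=\bigsqcup_{l=1}^mC^l_{i_l,i_l}$; it is a normal $(K,\epsilon)$-Følner set if moreover $Su$ is $(K,\epsilon)$-Følner for every $u\in\mathcal G^{(0)}$. *)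

theory Defs
  imports "HOL-Analysis.Analysis"
begin

text \<open>A groupoid is modelled on a whole type 'g (the arrows); the structure maps are
  source, range, (partial) multiplication and inverse. The product g h is
  defined (composable) iff src g = rng h.\<close>

record 'g groupoid_ops =
  src :: "'g \<Rightarrow> 'g"
  rng :: "'g \<Rightarrow> 'g"
  mul :: "'g \<Rightarrow> 'g \<Rightarrow> 'g"
  ginv :: "'g \<Rightarrow> 'g"

definition units :: "'g groupoid_ops \<Rightarrow> 'g set" where
  "units G = {u. rng G u = u \<and> src G u = u}"

definition algebraic_groupoid :: "'g groupoid_ops \<Rightarrow> bool" where
  "algebraic_groupoid G \<longleftrightarrow>
     (\<forall>g. src G g \<in> units G \<and> rng G g \<in> units G) \<and>
     (\<forall>g h. src G g = rng G h \<longrightarrow>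
         src G (mul G g h) = src G h \<and> rng G (mul G g h) = rng G g) \<and>
     (\<forall>g h k. src G g = rng G h \<longrightarrow> src G h = rng G k \<longrightarrow>
         mul G (mul G g h) k = mul G g (mul G h k)) \<and>
     (\<forall>g. mul G (rng G g) g = g \<and> mul G g (src G g) = g) \<and>
     (\<forall>g. src G (ginv G g) = rng G g \<and> rng G (ginv G g) = src G g \<and>
         mul G g (ginv G g) = rng G g \<and> mul G (ginv G g) g = src G g)"

definition bisection :: "'g groupoid_ops \<Rightarrow> 'g set \<Rightarrow> bool" where
  "bisection G B \<longleftrightarrow> inj_on (rng G) B \<and> inj_on (src G) B"

definition local_homeomorphism :: "('g::topological_space \<Rightarrow> 'g) \<Rightarrow> bool" where
  "local_homeomorphism f \<longleftrightarrow>
     (\<forall>g. \<exists>U. open U \<and> g \<in> U \<and> open (f ` U) \<and>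
        (\<exists>f'. homeomorphism U (f ` U) f f'))"

text \<open>Standing conventions: sigma-compact, locally compact, Hausdorff (class t2_space),
  etale, ample topological groupoid with compact unit space.\<close>
definition standing_groupoid :: "('g::t2_space) groupoid_ops \<Rightarrow> bool" where
  "standing_groupoid G \<longleftrightarrow>
     algebraic_groupoid G \<and>
     continuous_on {(g, h). src G g = rng G h} (\<lambda>(g, h). mul G g h) \<and>
     continuous_on UNIV (ginv G) \<and>
     continuous_on UNIV (src G) \<and> continuous_on UNIV (rng G) \<and>
     locally_compact_space (euclidean :: 'g topology) \<and>
     (\<exists>C :: nat \<Rightarrow> 'g set. (\<forall>n. compact (C n)) \<and> (\<Union>n. C n) = UNIV) \<and>
     local_homeomorphism (rng G) \<and>
     (\<forall>W g. open W \<longrightarrow> g \<in> W \<longrightarrow>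
        (\<exists>B. compact B \<and> open B \<and> bisection G B \<and> g \<in> B \<and> B \<subseteq> W)) \<and>
     compact (units G)"

definition principal :: "'g groupoid_ops \<Rightarrow> bool" where
  "principal G \<longleftrightarrow> (\<forall>g. src G g = rng G g \<longrightarrow> g \<in> units G)"

definition setmul :: "'g groupoid_ops \<Rightarrow> 'g set \<Rightarrow> 'g set \<Rightarrow> 'g set" where
  "setmul G A B = {mul G a b | a b. a \<in> A \<and> b \<in> B \<and> src G a = rng G b}"

definition fibre :: "'g groupoid_ops \<Rightarrow> 'g set \<Rightarrow> 'g \<Rightarrow> 'g set" where
  "fibre G A u = {a \<in> A. src G a = u}"

text \<open>(K,eps)-Foelner: finite nonempty F with |KF \ F| <= eps |F|
  (the cardinality |KF \ F| is required to be finite, as an infinite one is not <= eps|F|).\<close>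
definition foelner :: "'g groupoid_ops \<Rightarrow> 'g set \<Rightarrow> real \<Rightarrow> 'g set \<Rightarrow> bool" where
  "foelner G K eps F \<longleftrightarrow> finite F \<and> F \<noteq> {} \<and>
     finite (setmul G K F - F) \<and> real (card (setmul G K F - F)) \<le> eps * real (card F)"

definition ubiquitously_fiberwise_amenable :: "('g::topological_space) groupoid_ops \<Rightarrow> bool" where
  "ubiquitously_fiberwise_amenable G \<longleftrightarrow>
     (\<forall>K eps. compact K \<longrightarrow> eps > 0 \<longrightarrow>
        (\<exists>L. compact L \<and> (\<forall>u \<in> units G.
           \<exists>F. F \<subseteq> fibre G L u \<union> {u} \<and> foelner G K eps F)))"

definition multisection :: "'g groupoid_ops \<Rightarrow> nat set \<Rightarrow> (nat \<Rightarrow> nat \<Rightarrow> 'g set) \<Rightarrow> bool" where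
  "multisection G I C \<longleftrightarrow> finite I \<and>
     (\<forall>i\<in>I. \<forall>j\<in>I. bisection G (C i j)) \<and>
     (\<forall>i\<in>I. \<forall>j\<in>I. \<forall>k\<in>I. setmul G (C i j) (C j k) = C i k) \<and>
     (\<forall>i\<in>I. C i i \<subseteq> units G) \<and>
     (\<forall>i\<in>I. \<forall>j\<in>I. i \<noteq> j \<longrightarrow> C i i \<inter> C j j = {})"

definition compact_open_multisection ::
    "('g::topological_space) groupoid_ops \<Rightarrow> nat set \<Rightarrow> (nat \<Rightarrow> nat \<Rightarrow> 'g set) \<Rightarrow> bool" where
  "compact_open_multisection G I C \<longleftrightarrow> multisection G I C \<and>
     (\<forall>i\<in>I. \<forall>j\<in>I. compact (C i j) \<and> open (C i j))"

definition normal_set :: "('g::topological_space) groupoid_ops \<Rightarrow> 'g set \<Rightarrow> bool" where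
  "normal_set G S \<longleftrightarrow> compact S \<and> open S \<and>
     (\<exists>(m::nat) (I :: nat \<Rightarrow> nat set) (C :: nat \<Rightarrow> nat \<Rightarrow> nat \<Rightarrow> 'g set) (i0 :: nat \<Rightarrow> nat).
        (\<forall>l<m. compact_open_multisection G (I l) (C l) \<and> i0 l \<in> I l) \<and>
        S = (\<Union>l<m. \<Union>i\<in>I l. C l i (i0 l)) \<and>
        (\<forall>l<m. \<forall>l'<m. \<forall>i\<in>I l. \<forall>i'\<in>I l'. (l, i) \<noteq> (l', i') \<longrightarrow>
            C l i (i0 l) \<inter> C l' i' (i0 l') = {}) \<and>
        units G = (\<Union>l<m. C l (i0 l) (i0 l)) \<and>
        (\<forall>l<m. \<forall>l'<m. l \<noteq> l' \<longrightarrow> C l (i0 l) (i0 l) \<inter> C l' (i0 l') (i0 l') = {}))"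

definition normal_foelner_set ::
    "('g::topological_space) groupoid_ops \<Rightarrow> 'g set \<Rightarrow> real \<Rightarrow> 'g set \<Rightarrow> bool" where
  "normal_foelner_set G K eps S \<longleftrightarrow> normal_set G S \<and>
     (\<forall>u \<in> units G. foelner G K eps (fibre G S u))"

end

theory Submission
  imports Defs
begin

text \<open>Around a unit u, take a F{\o}lner set F in the source fibre of u containing u (from
  ubiquitous fiberwise amenability, enlarged by u). Since G is principal, the arrows of F have
  distinct ranges, so they sit in compact open bisections with pairwise disjoint ranges.
  Over any small compact open set W of units these bisections, cut down to sources in W,
  form a tower (a multisection with a base level W), and by upper semicontinuity of the size of
  the K-boundary its fibres over W stay F{\o}lner. A compact open partition of the unit space
  subordinate to such neighbourhoods then gives the castle of towers, i.e. the normal set.\<close>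

lemma finite_points_separated:
  fixes x :: "nat \<Rightarrow> 'a::t2_space"
  assumes "\<forall>i<n. \<forall>j<n. i \<noteq> j \<longrightarrow> x i \<noteq> x j"
  shows "\<exists>N. \<forall>i<n. open (N i) \<and> x i \<in> N i \<and> (\<forall>j<n. j \<noteq> i \<longrightarrow> N i \<inter> N j = {})"
proof -
  have "\<forall>i j. \<exists>P Q. i < n \<longrightarrow> j < n \<longrightarrow> i \<noteq> j \<longrightarrow>
      open P \<and> open Q \<and> x i \<in> P \<and> x j \<in> Q \<and> P \<inter> Q = {}"
    using assms hausdorff by metis
  then obtain P Q where PQ: "\<And>i j. i < n \<Longrightarrow> j < n \<Longrightarrow> i \<noteq> j \<Longrightarrow>
      open (P i j) \<and> open (Q i j) \<and> x i \<in> P i j \<and> x j \<in> Q i j \<and> P i j \<inter> Q i j = {}"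
    by metis
  define N where "N i = (\<Inter>j\<in>{..<n} - {i}. P i j \<inter> Q j i)" for i
  have "open (N i)" if "i < n" for i
    unfolding N_def using PQ that by (intro open_INT) auto
  moreover have "x i \<in> N i" if "i < n" for i
    unfolding N_def using PQ that by auto
  moreover have "N i \<inter> N j = {}" if "i < n" "j < n" "i \<noteq> j" for i j
  proof -
    have "N i \<subseteq> P i j" "N j \<subseteq> Q i j" unfolding N_def using that by auto
    thus ?thesis using PQ[OF that] by blast
  qed
  ultimately show ?thesis by (intro exI[of _ N]) auto
qed

lemma compact_open_disjointed:
  fixes A :: "nat \<Rightarrow> 'a::t2_space set"
  assumes "\<And>i. i \<le> l \<Longrightarrow> compact (A i) \<and> open (A i)"
  shows "compact (disjointed A l) \<and> open (disjointed A l)"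
proof -
  have "compact (\<Union>i<l. A i)" using assms by (intro compact_UN) auto
  moreover have "open (\<Union>i<l. A i)" using assms by (intro open_UN) auto
  ultimately show ?thesis using assms[of l] unfolding disjointed_def atLeast0LessThan
    by (metis compact_diff open_Diff compact_imp_closed order_refl)
qed

text \<open>Disjointify a finite cover by compact open sets lying in such neighbourhoods.\<close>
lemma compact_open_partition:
  fixes X :: "'a::t2_space set"
  assumes "compact X" "open X"
    and basis: "\<And>x V. x \<in> X \<Longrightarrow> open V \<Longrightarrow> x \<in> V \<Longrightarrow> \<exists>B. compact B \<and> open B \<and> x \<in> B \<and> B \<subseteq> V"
    and small: "\<And>x. x \<in> X \<Longrightarrow> \<exists>V. open V \<and> x \<in> V \<and> (\<forall>W. compact W \<and> open W \<and> W \<subseteq> V \<longrightarrow> Q W)"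
  shows "\<exists>(m::nat) W. (\<forall>l<m. compact (W l) \<and> open (W l) \<and> Q (W l)) \<and> (\<Union>l<m. W l) = X \<and>
           (\<forall>l l'. l \<noteq> l' \<longrightarrow> W l \<inter> W l' = {})"
proof -
  have "\<forall>x\<in>X. \<exists>B. compact B \<and> open B \<and> x \<in> B \<and> B \<subseteq> X \<and>
      (\<forall>W. compact W \<and> open W \<and> W \<subseteq> B \<longrightarrow> Q W)"
  proof
    fix x assume x: "x \<in> X"
    obtain V where V: "open V" "x \<in> V" "\<forall>W. compact W \<and> open W \<and> W \<subseteq> V \<longrightarrow> Q W"
      using small[OF x] by blast
    obtain B where B: "compact B" "open B" "x \<in> B" "B \<subseteq> V \<inter> X"
      using basis[OF x open_Int[OF V(1) \<open>open X\<close>]] V(2) x by blast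
    have "\<forall>W. compact W \<and> open W \<and> W \<subseteq> B \<longrightarrow> Q W" using V(3) B(4) by auto
    with B show "\<exists>B. compact B \<and> open B \<and> x \<in> B \<and> B \<subseteq> X \<and>
      (\<forall>W. compact W \<and> open W \<and> W \<subseteq> B \<longrightarrow> Q W)" by blast
  qed
  then obtain B where B: "\<And>x. x \<in> X \<Longrightarrow> compact (B x) \<and> open (B x) \<and> x \<in> B x \<and> B x \<subseteq> X \<and>
      (\<forall>W. compact W \<and> open W \<and> W \<subseteq> B x \<longrightarrow> Q W)"
    by metis
  obtain Xs where Xs: "Xs \<subseteq> X" "finite Xs" "X \<subseteq> (\<Union>x\<in>Xs. B x)"
    using compactE_image[OF \<open>compact X\<close>, of X B] B by blast
  obtain g where g: "bij_betw g {..<card Xs} Xs"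
    using ex_bij_betw_nat_finite[OF Xs(2)] by (metis atLeast0LessThan)
  define A where "A l = B (g l)" for l
  have gXs: "g ` {..<card Xs} = Xs" by (rule bij_betw_imp_surj_on[OF g])
  have A: "compact (A l) \<and> open (A l) \<and> A l \<subseteq> X \<and>
      (\<forall>W. compact W \<and> open W \<and> W \<subseteq> A l \<longrightarrow> Q W)" if "l < card Xs" for l
  proof -
    have "g l \<in> X" using gXs Xs(1) that by blast
    thus ?thesis unfolding A_def using B by blast
  qed
  have compact_open: "compact (disjointed A l) \<and> open (disjointed A l)" if "l < card Xs" for l
    using A that by (intro compact_open_disjointed) auto
  have "(\<Union>l<card Xs. disjointed A l) = (\<Union>l<card Xs. A l)"
    using finite_UN_disjointed_eq[of A "card Xs"] by (simp add: atLeast0LessThan)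
  also have "\<dots> = (\<Union>x\<in>g ` {..<card Xs}. B x)" by (simp add: A_def)
  also have "\<dots> = X" unfolding gXs using Xs B by blast
  finally have "(\<Union>l<card Xs. disjointed A l) = X" .
  moreover have "disjointed A l \<inter> disjointed A l' = {}" if "l \<noteq> l'" for l l'
    using disjoint_family_disjointed[of A] that unfolding disjoint_family_on_def by blast
  moreover have "Q (disjointed A l)" if "l < card Xs" for l
    using A[OF that] compact_open[OF that] disjointed_subset[of A l] by blast
  ultimately have partition: "(\<forall>l<card Xs. compact (disjointed A l) \<and> open (disjointed A l) \<and> Q (disjointed A l)) \<and>
      (\<Union>l<card Xs. disjointed A l) = X \<and> (\<forall>l l'. l \<noteq> l' \<longrightarrow> disjointed A l \<inter> disjointed A l' = {})"
    using compact_open by blast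
  show ?thesis by (intro exI[of _ "card Xs"] exI[of _ "disjointed A"]) (rule partition)
qed

text \<open>A tower over W is a multisection with distinguished level C i0 i0 = W; a normal set is
  the union of the i0-columns C i i0 of towers whose bases W partition the unit space.\<close>
definition tower ::
    "('g::topological_space) groupoid_ops \<Rightarrow> 'g set \<Rightarrow> nat \<Rightarrow> (nat \<Rightarrow> nat \<Rightarrow> 'g set) \<Rightarrow> nat \<Rightarrow> bool"
  where "tower G W n C i0 \<longleftrightarrow> compact_open_multisection G {..<n} C \<and> i0 < n \<and> C i0 i0 = W \<and>
     (\<forall>i<n. src G ` C i i0 \<subseteq> W) \<and> (\<forall>i<n. \<forall>j<n. i \<noteq> j \<longrightarrow> C i i0 \<inter> C j i0 = {})"

definition foelner_tower ::
    "('g::topological_space) groupoid_ops \<Rightarrow> 'g set \<Rightarrow> real \<Rightarrow> 'g set \<Rightarrow> bool"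
  where "foelner_tower G K eps W \<longleftrightarrow>
     (\<exists>n C i0. tower G W n C i0 \<and> (\<forall>v\<in>W. foelner G K eps (fibre G (\<Union>i<n. C i i0) v)))"

locale ample_groupoid =
  fixes G :: "('g::t2_space) groupoid_ops"
  assumes standing: "standing_groupoid G"
begin

abbreviation s :: "'g \<Rightarrow> 'g" where "s \<equiv> src G"
abbreviation r :: "'g \<Rightarrow> 'g" where "r \<equiv> rng G"
abbreviation gmul :: "'g \<Rightarrow> 'g \<Rightarrow> 'g" (infixl "\<cdot>" 70) where "g \<cdot> h \<equiv> mul G g h"
abbreviation gi :: "'g \<Rightarrow> 'g" where "gi \<equiv> ginv G"

lemma algebraic: "algebraic_groupoid G"
  using standing unfolding standing_groupoid_def by blast

lemma src_mem_units [simp]: "s g \<in> units G" and rng_mem_units [simp]: "r g \<in> units G"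
  using algebraic unfolding algebraic_groupoid_def by auto

lemma src_unit: "u \<in> units G \<Longrightarrow> s u = u" and rng_unit: "u \<in> units G \<Longrightarrow> r u = u"
  by (auto simp: units_def)

lemma src_src [simp]: "s (s g) = s g" and rng_src [simp]: "r (s g) = s g"
  and src_rng [simp]: "s (r g) = r g" and rng_rng [simp]: "r (r g) = r g"
  using src_unit rng_unit by auto

lemma src_mul [simp]: "s g = r h \<Longrightarrow> s (g \<cdot> h) = s h"
  and rng_mul [simp]: "s g = r h \<Longrightarrow> r (g \<cdot> h) = r g"
  using algebraic unfolding algebraic_groupoid_def by auto

lemma mul_assoc: "s g = r h \<Longrightarrow> s h = r k \<Longrightarrow> g \<cdot> h \<cdot> k = g \<cdot> (h \<cdot> k)"
  using algebraic unfolding algebraic_groupoid_def by auto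

lemma mul_rng_left [simp]: "r g \<cdot> g = g" and mul_src_right [simp]: "g \<cdot> s g = g"
  using algebraic unfolding algebraic_groupoid_def by auto

lemma src_ginv [simp]: "s (gi g) = r g" and rng_ginv [simp]: "r (gi g) = s g"
  and mul_ginv_right [simp]: "g \<cdot> gi g = r g" and mul_ginv_left [simp]: "gi g \<cdot> g = s g"
  using algebraic unfolding algebraic_groupoid_def by auto

lemma ginv_ginv [simp]: "gi (gi g) = g"
proof -
  have "gi (gi g) = gi (gi g) \<cdot> (gi g \<cdot> g)" using mul_src_right[of "gi (gi g)"] by simp
  also have "\<dots> = gi (gi g) \<cdot> gi g \<cdot> g" by (rule mul_assoc[symmetric]) simp_all
  also have "\<dots> = g" by simp
  finally show ?thesis .
qed

lemma ginv_mul_cancel_left [simp]: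
  assumes "s g = r h" shows "gi g \<cdot> (g \<cdot> h) = h"
proof -
  have "gi g \<cdot> (g \<cdot> h) = gi g \<cdot> g \<cdot> h" by (rule mul_assoc[symmetric]) (simp_all add: assms)
  thus ?thesis using assms by simp
qed

lemma ginv_unit: "u \<in> units G \<Longrightarrow> gi u = u"
  using mul_src_right[of "gi u"] by (simp add: src_unit rng_unit)

lemma mul_cancel_right: "s a = r g \<Longrightarrow> s b = r g \<Longrightarrow> a \<cdot> g = b \<cdot> g \<Longrightarrow> a = b"
  by (metis mul_assoc mul_ginv_right mul_src_right rng_ginv)

lemma principal_src_rng_inj:
  assumes "principal G" "s a = s b" "r a = r b"
  shows "a = b"
proof -
  have "a \<cdot> gi b \<in> units G" using assms unfolding principal_def by simp
  hence unit: "a \<cdot> gi b = r b" using src_unit assms(2) by fastforce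
  have "a = a \<cdot> gi b \<cdot> b" using assms(2)[symmetric] by (simp add: mul_assoc)
  also have "\<dots> = b" by (simp add: unit)
  finally show ?thesis .
qed

lemma principal_rng_inj_on_fibre:
  assumes "principal G" shows "inj_on r {g. s g = u}"
  using principal_src_rng_inj[OF assms] by (auto intro: inj_onI)

lemma continuous_mul: "continuous_on {(g, h). s g = r h} (\<lambda>(g, h). g \<cdot> h)"
  and continuous_ginv: "continuous_on UNIV gi"
  and continuous_src: "continuous_on UNIV s" and continuous_rng: "continuous_on UNIV r"
  and local_homeomorphism_rng: "local_homeomorphism r"
  and ample: "\<And>W g. open W \<Longrightarrow> g \<in> W \<Longrightarrow> \<exists>B. compact B \<and> open B \<and> bisection G B \<and> g \<in> B \<and> B \<subseteq> W"
  and compact_units: "compact (units G)"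
  using standing unfolding standing_groupoid_def by auto

lemma open_vimage_src: "open A \<Longrightarrow> open (s -` A)"
  and open_vimage_rng: "open A \<Longrightarrow> open (r -` A)"
  and closed_vimage_src: "closed A \<Longrightarrow> closed (s -` A)"
  using continuous_src continuous_rng
  by (auto intro: continuous_open_vimage continuous_closed_vimage simp: continuous_on_eq_continuous_at)

lemma ginv_image_eq_vimage: "gi ` A = gi -` A"
  by (auto simp: image_iff) (metis ginv_ginv)

lemma open_ginv_image: "open A \<Longrightarrow> open (gi ` A)"
  using continuous_ginv continuous_open_vimage continuous_on_eq_continuous_at
  unfolding ginv_image_eq_vimage by blast

lemma compact_ginv_image: "compact A \<Longrightarrow> compact (gi ` A)"
  using compact_continuous_image continuous_on_subset continuous_ginv by blast

lemma open_rng_image: "open A \<Longrightarrow> open (r ` A)"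
proof (subst open_subopen, intro ballI)
  fix y assume "open A" "y \<in> r ` A"
  then obtain g where g: "g \<in> A" "y = r g" by blast
  obtain U f' where U: "open U" "g \<in> U" "open (r ` U)" "homeomorphism U (r ` U) r f'"
    using local_homeomorphism_rng unfolding local_homeomorphism_def by blast
  have "openin (top_of_set U) (A \<inter> U)"
    using openin_open_Int[OF \<open>open A\<close>, of U] by (simp add: Int_commute)
  hence "openin (top_of_set (r ` U)) (r ` (A \<inter> U))"
    using homeomorphism_imp_open_map[OF U(4)] by blast
  hence "open (r ` (A \<inter> U))" using U(3) openin_open_trans by blast
  thus "\<exists>T. open T \<and> y \<in> T \<and> T \<subseteq> r ` A" using g U(2) by blast
qed

lemma open_src_image: "open A \<Longrightarrow> open (s ` A)"
proof -
  have "s ` A = r ` gi ` A" by (simp add: image_image)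
  thus "open A \<Longrightarrow> open (s ` A)" by (simp add: open_rng_image open_ginv_image)
qed

text \<open>Near a unit, r is injective on some open U; on U \<inter> r\<inverse>(U) this forces r g = g.\<close>
lemma open_units: "open (units G)"
proof (subst open_subopen, intro ballI)
  fix u assume u: "u \<in> units G"
  obtain U f' where U: "open U" "u \<in> U" "homeomorphism U (r ` U) r f'"
    using local_homeomorphism_rng unfolding local_homeomorphism_def by blast
  have inj: "inj_on r U" using U(3) by (metis homeomorphism_def inj_on_inverseI)
  have "U \<inter> r -` U \<subseteq> units G"
  proof
    fix g assume "g \<in> U \<inter> r -` U"
    hence "r g = g" using inj_onD[OF inj, of "r g" g] by simp
    thus "g \<in> units G" by (metis rng_mem_units)
  qed
  moreover have "open (U \<inter> r -` U)" using U(1) open_vimage_rng by blast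
  moreover have "u \<in> U \<inter> r -` U" using U(2) u rng_unit by auto
  ultimately show "\<exists>T. open T \<and> u \<in> T \<and> T \<subseteq> units G" by blast
qed

text \<open>A compact set is covered by finitely many bisections, each meeting a fibre at most once.\<close>
lemma finite_fibre: assumes "compact T" shows "finite (fibre G T x)"
proof -
  have "fibre G T x = T \<inter> s -` {x}" unfolding fibre_def by auto
  hence cT: "compact (fibre G T x)"
    using assms closed_vimage_src[of "{x}"] by (simp add: compact_Int_closed)
  obtain Ob where Ob: "\<And>t. open (Ob t) \<and> t \<in> Ob t \<and> bisection G (Ob t)"
    using ample[of UNIV] by (metis open_UNIV UNIV_I)
  obtain C where C: "C \<subseteq> fibre G T x" "finite C" "fibre G T x \<subseteq> (\<Union>t\<in>C. Ob t)"
    using compactE_image[OF cT, of "fibre G T x" Ob] Ob by blast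
  have "fibre G T x \<subseteq> C"
  proof
    fix y assume y: "y \<in> fibre G T x"
    then obtain t where t: "t \<in> C" "y \<in> Ob t" using C(3) by blast
    have "s t = s y" using y C(1) t(1) unfolding fibre_def by auto
    hence "t = y" using Ob[of t] t(2) unfolding bisection_def by (meson inj_onD)
    thus "y \<in> C" using t by simp
  qed
  thus ?thesis using C(2) finite_subset by blast
qed

lemma finite_rng_fibre: assumes "compact L" shows "finite {l \<in> L. r l = y}"
proof -
  have "{l \<in> L. r l = y} \<subseteq> gi ` fibre G (gi ` L) y"
  proof
    fix l assume "l \<in> {l \<in> L. r l = y}"
    hence "gi l \<in> fibre G (gi ` L) y" unfolding fibre_def by auto
    thus "l \<in> gi ` fibre G (gi ` L) y" by (rule rev_image_eqI) simp
  qed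
  thus ?thesis using finite_fibre[OF compact_ginv_image[OF assms]] finite_subset by blast
qed

lemma setmul_eq_image:
  "setmul G A B = (\<lambda>(g, h). g \<cdot> h) ` ((A \<times> B) \<inter> {p. s (fst p) = r (snd p)})"
  unfolding setmul_def by force

lemma setmul_memI: "a \<in> A \<Longrightarrow> b \<in> B \<Longrightarrow> s a = r b \<Longrightarrow> a \<cdot> b \<in> setmul G A B"
  unfolding setmul_def by blast

lemma compact_setmul: assumes "compact A" "compact B" shows "compact (setmul G A B)"
proof -
  have "closed {p. s (fst p) = r (snd p)}"
    by (intro closed_Collect_eq continuous_on_compose2[OF continuous_src]
        continuous_on_compose2[OF continuous_rng] continuous_intros) auto
  hence "compact ((A \<times> B) \<inter> {p. s (fst p) = r (snd p)})"
    using compact_Times[OF assms] by (rule compact_Int_closed[rotated])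
  moreover have "continuous_on ((A \<times> B) \<inter> {p. s (fst p) = r (snd p)}) (\<lambda>(g, h). g \<cdot> h)"
    by (rule continuous_on_subset[OF continuous_mul]) auto
  ultimately show ?thesis unfolding setmul_eq_image by (rule compact_continuous_image[rotated])
qed

text \<open>The local inverse of s on an open bisection is continuous, since s is an open map.\<close>
lemma continuous_on_src_section:
  assumes "open P" "bisection G P"
  shows "continuous_on (s ` P) (inv_into P s)"
proof (rule continuous_on_inverse_open_map)
  show "continuous_on P s" using continuous_src continuous_on_subset by blast
  show "\<And>x. x \<in> P \<Longrightarrow> inv_into P s (s x) = x"
    using assms(2) unfolding bisection_def by simp
  fix U assume "openin (top_of_set P) U"
  hence "open U" "U \<subseteq> P" using assms(1) openin_open_trans openin_imp_subset by blast+
  thus "openin (top_of_set (s ` P)) (s ` U)"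
    using open_src_image by (metis image_mono inf.absorb_iff2 openin_open_Int)
qed simp

text \<open>Near a product a b, with b in an open bisection P, every c with s c in s(P) factors as
  (c (\<tau> (s c))\<inverse>) (\<tau> (s c)) with \<tau> the section of s over P; the first factor depends
  continuously on c and equals a at c = a b.\<close>
lemma open_setmul: assumes "open A" "open B" shows "open (setmul G A B)"
proof (subst open_subopen, intro ballI)
  fix c assume "c \<in> setmul G A B"
  then obtain a b where ab: "a \<in> A" "b \<in> B" "s a = r b" "c = a \<cdot> b"
    unfolding setmul_def by blast
  obtain P where P: "open P" "bisection G P" "b \<in> P" "P \<subseteq> B"
    using ample[OF assms(2) ab(2)] by blast
  define \<tau> where "\<tau> = inv_into P s"
  have \<tau>: "\<tau> y \<in> P \<and> s (\<tau> y) = y" if "y \<in> s ` P" for y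
    unfolding \<tau>_def using that by (simp add: inv_into_into f_inv_into_f)
  define Dom where "Dom = s -` (s ` P)"
  define \<phi> where "\<phi> = (\<lambda>c'. c' \<cdot> gi (\<tau> (s c')))"
  have "continuous_on Dom (\<lambda>c'. \<tau> (s c'))" unfolding \<tau>_def
    by (rule continuous_on_compose2[OF continuous_on_src_section[OF P(1,2)]
          continuous_on_subset[OF continuous_src]]) (auto simp: Dom_def)
  hence "continuous_on Dom (\<lambda>c'. (c', gi (\<tau> (s c'))))"
    by (intro continuous_on_Pair continuous_on_id continuous_on_compose2[OF continuous_ginv]) auto
  hence "continuous_on Dom ((\<lambda>(g, h). g \<cdot> h) \<circ> (\<lambda>c'. (c', gi (\<tau> (s c')))))"
    by (rule continuous_on_compose, intro continuous_on_subset[OF continuous_mul])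
      (auto simp: Dom_def \<tau>)
  hence "continuous_on Dom \<phi>" unfolding \<phi>_def by (simp add: o_def)
  moreover have "open Dom" unfolding Dom_def using open_vimage_src open_src_image P(1) by blast
  ultimately have "open (\<phi> -` A \<inter> Dom)"
    using assms(1) continuous_on_open_vimage by blast
  hence "open (Dom \<inter> \<phi> -` A)" by (simp add: Int_commute)
  moreover have "c \<in> Dom \<inter> \<phi> -` A"
  proof -
    have "s c = s b" using ab by simp
    hence "c \<in> Dom" and "\<tau> (s c) = b"
      unfolding Dom_def \<tau>_def using P(2,3) unfolding bisection_def by auto
    moreover have "a \<cdot> b \<cdot> gi b = a" using ab(3)[symmetric] by (simp add: mul_assoc)
    ultimately show ?thesis unfolding \<phi>_def using ab by simp
  qed
  moreover have "Dom \<inter> \<phi> -` A \<subseteq> setmul G A B"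
  proof
    fix c' assume c': "c' \<in> Dom \<inter> \<phi> -` A"
    define b' where "b' = \<tau> (s c')"
    have b': "b' \<in> P" "s b' = s c'" using c' \<tau> unfolding Dom_def b'_def by auto
    have "s (\<phi> c') = r b'" unfolding \<phi>_def b'_def[symmetric] using b'(2) by simp
    hence "\<phi> c' \<cdot> b' \<in> setmul G A B" using setmul_memI c' b'(1) P(4) by blast
    moreover have "\<phi> c' \<cdot> b' = c'"
      unfolding \<phi>_def b'_def[symmetric] using b'(2) by (simp add: mul_assoc)
    ultimately show "c' \<in> setmul G A B" by simp
  qed
  ultimately show "\<exists>T. open T \<and> c \<in> T \<and> T \<subseteq> setmul G A B" by blast
qed

lemma card_fibre_Int_bisection_le_one:
  assumes "compact T" "bisection G B"
  shows "card (fibre G T v \<inter> B) \<le> 1"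
proof -
  have "\<forall>a\<in>fibre G T v \<inter> B. \<forall>b\<in>fibre G T v \<inter> B. a = b"
    using assms(2) unfolding bisection_def fibre_def by (auto dest: inj_onD)
  moreover have "finite (fibre G T v \<inter> B)"
    by (rule finite_subset[OF Int_lower1 finite_fibre[OF assms(1)]])
  ultimately show ?thesis by (simp add: card_le_Suc0_iff_eq)
qed

text \<open>Points of T near the finitely many points of T u lie in bisections around them; the rest of
  T is compact, so its image under s is closed and misses u.\<close>
lemma card_fibre_upper_semicontinuous:
  assumes "compact T"
  shows "\<exists>V. open V \<and> u \<in> V \<and> (\<forall>v\<in>V. card (fibre G T v) \<le> card (fibre G T u))"
proof -
  define E where "E = fibre G T u"
  obtain Ob where Ob: "\<And>t. open (Ob t) \<and> t \<in> Ob t \<and> bisection G (Ob t)"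
    using ample[of UNIV] by (metis open_UNIV UNIV_I)
  define R where "R = T - (\<Union>e\<in>E. Ob e)"
  have "compact R" unfolding R_def using assms Ob by (intro compact_diff) auto
  hence "compact (s ` R)" using compact_continuous_image continuous_on_subset continuous_src by blast
  hence "closed (s ` R)" by (rule compact_imp_closed)
  moreover have "u \<notin> s ` R"
  proof
    assume "u \<in> s ` R"
    then obtain y where "y \<in> R" "s y = u" by auto
    hence "y \<in> E" unfolding R_def E_def fibre_def by auto
    thus False using \<open>y \<in> R\<close> Ob[of y] unfolding R_def by blast
  qed
  moreover have "card (fibre G T v) \<le> card E" if "v \<notin> s ` R" for v
  proof -
    have "fibre G T v \<subseteq> (\<Union>e\<in>E. fibre G T v \<inter> Ob e)"
    proof
      fix y assume y: "y \<in> fibre G T v"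
      hence "y \<notin> R" using that unfolding fibre_def by auto
      thus "y \<in> (\<Union>e\<in>E. fibre G T v \<inter> Ob e)" using y unfolding R_def fibre_def by auto
    qed
    moreover have "finite (\<Union>e\<in>E. fibre G T v \<inter> Ob e)"
      using finite_fibre[OF assms, of v] by (rule finite_subset[rotated]) blast
    ultimately have "card (fibre G T v) \<le> card (\<Union>e\<in>E. fibre G T v \<inter> Ob e)"
      by (rule card_mono[rotated])
    also have "\<dots> \<le> (\<Sum>e\<in>E. card (fibre G T v \<inter> Ob e))"
      unfolding E_def by (rule card_UN_le[OF finite_fibre[OF assms]])
    also have "\<dots> \<le> (\<Sum>e\<in>E. 1)"
      using card_fibre_Int_bisection_le_one[OF assms] Ob by (intro sum_mono) blast
    finally show ?thesis by simp
  qed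
  ultimately show ?thesis unfolding E_def by (metis ComplD ComplI open_Compl)
qed

lemma fibre_setmul_diff:
  "fibre G (setmul G K B - B) v = setmul G K (fibre G B v) - fibre G B v"
  unfolding fibre_def setmul_def by auto blast+

lemma foelner_Un:
  assumes "foelner G K e A" "foelner G K e B" "A \<inter> B = {}"
  shows "foelner G K e (A \<union> B)"
proof -
  have sub: "setmul G K (A \<union> B) - (A \<union> B) \<subseteq> (setmul G K A - A) \<union> (setmul G K B - B)"
    unfolding setmul_def by blast
  have fin: "finite (setmul G K A - A)" "finite (setmul G K B - B)"
    using assms unfolding foelner_def by auto
  have "card (setmul G K (A \<union> B) - (A \<union> B)) \<le> card ((setmul G K A - A) \<union> (setmul G K B - B))"
    using sub fin by (simp add: card_mono)
  also have "\<dots> \<le> card (setmul G K A - A) + card (setmul G K B - B)" by (rule card_Un_le)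
  finally have "real (card (setmul G K (A \<union> B) - (A \<union> B))) \<le>
      real (card (setmul G K A - A)) + real (card (setmul G K B - B))" by linarith
  moreover have "real (card (A \<union> B)) = real (card A) + real (card B)"
    using assms unfolding foelner_def by (simp add: card_Un_disjoint)
  moreover have "finite (setmul G K (A \<union> B) - (A \<union> B))" using sub fin finite_subset by blast
  ultimately show ?thesis using assms unfolding foelner_def by (auto simp: distrib_left)
qed

text \<open>Right translation by g is a bijection from the arrows with source r g onto those with
  source s g that commutes with left multiplication by K.\<close>
lemma foelner_translate:
  assumes "\<forall>f\<in>F. s f = r g" "foelner G K e F"
  shows "foelner G K e (setmul G F {g})"
proof -
  define \<rho> where "\<rho> h = h \<cdot> g" for h
  have inj: "inj_on \<rho> {h. s h = r g}" unfolding \<rho>_def inj_on_def using mul_cancel_right by blast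
  have F_eq: "setmul G F {g} = \<rho> ` F" unfolding setmul_def \<rho>_def using assms(1) by auto
  have KF: "\<forall>x\<in>setmul G K F. s x = r g" unfolding setmul_def using assms(1) by auto
  have "setmul G K (\<rho> ` F) = \<rho> ` setmul G K F"
  proof (intro equalityI subsetI)
    fix x assume "x \<in> setmul G K (\<rho> ` F)"
    then obtain k f where kf: "k \<in> K" "f \<in> F" "s k = r (f \<cdot> g)" "x = k \<cdot> (f \<cdot> g)"
      unfolding setmul_def \<rho>_def by blast
    have "s k = r f" using kf assms(1) by simp
    hence "x = \<rho> (k \<cdot> f)" unfolding \<rho>_def using kf assms(1) by (simp add: mul_assoc)
    thus "x \<in> \<rho> ` setmul G K F" using setmul_memI[OF kf(1,2) \<open>s k = r f\<close>] by blast
  next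
    fix x assume "x \<in> \<rho> ` setmul G K F"
    then obtain k f where kf: "k \<in> K" "f \<in> F" "s k = r f" "x = \<rho> (k \<cdot> f)"
      unfolding setmul_def by blast
    have "x = k \<cdot> \<rho> f" using kf assms(1) by (simp add: \<rho>_def mul_assoc)
    moreover have "s k = r (\<rho> f)" unfolding \<rho>_def using kf assms(1) by simp
    ultimately show "x \<in> setmul G K (\<rho> ` F)" using setmul_memI[of k K "\<rho> f"] kf by blast
  qed
  moreover have sub: "F \<subseteq> {h. s h = r g}" "setmul G K F \<subseteq> {h. s h = r g}"
    using assms(1) KF by auto
  ultimately have "setmul G K (\<rho> ` F) - \<rho> ` F = \<rho> ` (setmul G K F - F)"
    using inj_on_image_set_diff[OF inj, of "setmul G K F" F] by auto
  moreover have "card (\<rho> ` F) = card F"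
    using card_image inj_on_subset[OF inj sub(1)] by blast
  moreover have "card (\<rho> ` (setmul G K F - F)) = card (setmul G K F - F)"
    using card_image inj_on_subset[OF inj] sub(2) by (metis Diff_subset subset_trans)
  ultimately show ?thesis using assms(2) unfolding foelner_def F_eq by auto
qed

text \<open>Translate a F{\o}lner set at r g, supported in L r g \<union> {r g}, to the right by g; only
  finitely many g produce a translate meeting D, namely those in D or of the form l\<inverse> h with
  h \<in> D and l \<in> L.\<close>
lemma exists_foelner_avoiding:
  assumes "ubiquitously_fiberwise_amenable G" "compact K" "e > 0"
    and "infinite {g. s g = u}" "finite D"
  shows "\<exists>A. A \<subseteq> {g. s g = u} \<and> A \<inter> D = {} \<and> foelner G K e A"
proof -
  have "\<exists>L. compact L \<and> (\<forall>x\<in>units G. \<exists>F. F \<subseteq> fibre G L x \<union> {x} \<and> foelner G K e F)"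
    using assms(1-3) unfolding ubiquitously_fiberwise_amenable_def by simp
  then obtain L where L: "compact L" "\<forall>x\<in>units G. \<exists>F. F \<subseteq> fibre G L x \<union> {x} \<and> foelner G K e F"
    by blast
  define Bad where "Bad = D \<union> (\<Union>h\<in>D. (\<lambda>l. gi l \<cdot> h) ` {l \<in> L. r l = r h})"
  have "finite Bad" unfolding Bad_def using assms(5) finite_rng_fibre[OF L(1)] by auto
  hence "infinite ({g. s g = u} - Bad)" using assms(4) by (simp add: Diff_infinite_finite)
  then obtain g where g: "s g = u" "g \<notin> Bad" using infinite_imp_nonempty by blast
  obtain F where F: "F \<subseteq> fibre G L (r g) \<union> {r g}" "foelner G K e F"
    using L(2) rng_mem_units by blast
  have Fs: "\<forall>f\<in>F. s f = r g" using F(1) unfolding fibre_def by auto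
  have "setmul G F {g} \<inter> D = {}"
  proof (rule ccontr)
    assume "setmul G F {g} \<inter> D \<noteq> {}"
    then obtain f where f: "f \<in> F" "f \<cdot> g \<in> D" unfolding setmul_def by auto
    show False
    proof (cases "f = r g")
      case True
      thus False using f g unfolding Bad_def by simp
    next
      case False
      hence fL: "f \<in> L" "s f = r g" using f F(1) unfolding fibre_def by auto
      have "g = gi f \<cdot> (f \<cdot> g)" using fL by (simp add: mul_assoc[symmetric])
      moreover have "f \<in> {l \<in> L. r l = r (f \<cdot> g)}" using fL by simp
      ultimately have "g \<in> (\<lambda>l. gi l \<cdot> (f \<cdot> g)) ` {l \<in> L. r l = r (f \<cdot> g)}" by (rule image_eqI)
      thus False using g f unfolding Bad_def by blast
    qed
  qed
  moreover have "setmul G F {g} \<subseteq> {h. s h = u}" unfolding setmul_def using Fs g by auto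
  ultimately show ?thesis using foelner_translate[OF Fs F(2)] by blast
qed

lemma exists_large_foelner:
  assumes "ubiquitously_fiberwise_amenable G" "compact K" "e > 0" "infinite {g. s g = u}"
  shows "\<exists>A. A \<subseteq> {g. s g = u} \<and> foelner G K e A \<and> card A \<ge> n"
proof (induction n)
  case 0
  then show ?case using exists_foelner_avoiding[OF assms, of "{}"] by auto
next
  case (Suc n)
  then obtain A where A: "A \<subseteq> {g. s g = u}" "foelner G K e A" "card A \<ge> n" by blast
  have "finite A" using A(2) unfolding foelner_def by simp
  then obtain B where B: "B \<subseteq> {g. s g = u}" "B \<inter> A = {}" "foelner G K e B"
    using exists_foelner_avoiding[OF assms] by blast
  have "finite B" "B \<noteq> {}" using B(3) unfolding foelner_def by auto
  hence "card B > 0" by (simp add: card_gt_0_iff)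
  hence "card (A \<union> B) \<ge> Suc n"
    using A(3) B(2) \<open>finite A\<close> \<open>finite B\<close> by (simp add: card_Un_disjoint inf_commute)
  moreover have "foelner G K e (A \<union> B)" using foelner_Un[OF A(2) B(3)] B(2) by blast
  ultimately show ?case using A(1) B(1) by blast
qed

lemma foelner_insert_unit:
  assumes "compact K" "u \<in> units G" "e > 0" "foelner G K (e / 2) A"
    and "real (card (fibre G K u)) \<le> e / 2 * real (card A)"
  shows "foelner G K e (insert u A)"
proof -
  have sub: "setmul G K (insert u A) - insert u A \<subseteq> (setmul G K A - A) \<union> fibre G K u"
  proof
    fix x assume x: "x \<in> setmul G K (insert u A) - insert u A"
    then obtain k f where kf: "k \<in> K" "f \<in> insert u A" "s k = r f" "x = k \<cdot> f"
      unfolding setmul_def by blast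
    show "x \<in> (setmul G K A - A) \<union> fibre G K u"
    proof (cases "f = u")
      case True
      thus ?thesis using kf assms(2) rng_unit unfolding fibre_def by auto
    next
      case False
      thus ?thesis using kf x setmul_memI[of k K f A] by auto
    qed
  qed
  have fin: "finite (setmul G K A - A)" "finite A" "A \<noteq> {}"
    using assms(4) unfolding foelner_def by auto
  have "card (setmul G K (insert u A) - insert u A) \<le> card ((setmul G K A - A) \<union> fibre G K u)"
    using sub fin finite_fibre[OF assms(1)] by (simp add: card_mono)
  also have "\<dots> \<le> card (setmul G K A - A) + card (fibre G K u)" by (rule card_Un_le)
  finally have "real (card (setmul G K (insert u A) - insert u A)) \<le> e * real (card A)"
    using assms(4,5) unfolding foelner_def by linarith
  also have "\<dots> \<le> e * real (card (insert u A))"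
    using assms(3) fin by (simp add: card_insert_le)
  finally show ?thesis
    using sub fin finite_fibre[OF assms(1)] finite_subset unfolding foelner_def by fastforce
qed

text \<open>If the source fibre of u is finite it is itself invariant; otherwise add u to a
  F{\o}lner set for e/2 so large that the at most |K u| new boundary points do not matter.\<close>
lemma exists_foelner_containing_unit:
  assumes "ubiquitously_fiberwise_amenable G" "compact K" "e > 0" "u \<in> units G"
  shows "\<exists>F. F \<subseteq> {g. s g = u} \<and> u \<in> F \<and> foelner G K e F"
proof (cases "finite {g. s g = u}")
  case True
  have no_boundary: "setmul G K {g. s g = u} - {g. s g = u} = {}" unfolding setmul_def by auto
  have "u \<in> {g. s g = u}" using assms(4) src_unit by simp
  hence "foelner G K e {g. s g = u}" using True assms(3) unfolding foelner_def no_boundary by auto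
  thus ?thesis using assms(4) src_unit by auto
next
  case False
  define N where "N = card (fibre G K u)"
  obtain A where A: "A \<subseteq> {g. s g = u}" "foelner G K (e / 2) A" "card A \<ge> nat \<lceil>2 * real N / e\<rceil>"
    using exists_large_foelner[OF assms(1,2) _ False] assms(3) by (metis half_gt_zero)
  have "2 * real N / e \<le> real (card A)" using A(3) by linarith
  hence "real N \<le> e / 2 * real (card A)" using assms(3) by (simp add: field_simps)
  hence "foelner G K e (insert u A)"
    using foelner_insert_unit[OF assms(2,4,3) A(2)] unfolding N_def by blast
  moreover have "insert u A \<subseteq> {g. s g = u}" using A(1) assms(4) src_unit by simp
  ultimately show ?thesis by blast
qed

lemma mem_setmul_ginv_image:
  "x \<in> setmul G D (gi ` E) \<longleftrightarrow> (\<exists>a b. a \<in> D \<and> b \<in> E \<and> s a = s b \<and> x = a \<cdot> gi b)"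
proof
  assume "x \<in> setmul G D (gi ` E)"
  then obtain a b where "a \<in> D" "b \<in> E" "s a = r (gi b)" "x = a \<cdot> gi b"
    unfolding setmul_def by blast
  thus "\<exists>a b. a \<in> D \<and> b \<in> E \<and> s a = s b \<and> x = a \<cdot> gi b" by auto
next
  assume "\<exists>a b. a \<in> D \<and> b \<in> E \<and> s a = s b \<and> x = a \<cdot> gi b"
  thus "x \<in> setmul G D (gi ` E)" using setmul_memI[of _ D _ "gi ` E"] by auto
qed

lemma bisection_setmul_ginv_image:
  assumes "bisection G D" "bisection G E"
  shows "bisection G (setmul G D (gi ` E))"
  unfolding bisection_def
proof
  show "inj_on r (setmul G D (gi ` E))"
  proof (rule inj_onI)
    fix x y assume "x \<in> setmul G D (gi ` E)" "y \<in> setmul G D (gi ` E)" "r x = r y"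
    then obtain a b a' b' where ab: "a \<in> D" "b \<in> E" "s a = s b" "x = a \<cdot> gi b"
      "a' \<in> D" "b' \<in> E" "s a' = s b'" "y = a' \<cdot> gi b'" "r x = r y"
      unfolding mem_setmul_ginv_image by blast
    hence "r a = r a'" by simp
    hence "a = a'" using ab(1,5) assms(1) unfolding bisection_def by (meson inj_onD)
    hence "b = b'" using ab assms(2) unfolding bisection_def by (metis inj_onD)
    thus "x = y" using ab \<open>a = a'\<close> by simp
  qed
  show "inj_on s (setmul G D (gi ` E))"
  proof (rule inj_onI)
    fix x y assume "x \<in> setmul G D (gi ` E)" "y \<in> setmul G D (gi ` E)" "s x = s y"
    then obtain a b a' b' where ab: "a \<in> D" "b \<in> E" "s a = s b" "x = a \<cdot> gi b"
      "a' \<in> D" "b' \<in> E" "s a' = s b'" "y = a' \<cdot> gi b'" "s x = s y"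
      unfolding mem_setmul_ginv_image by blast
    hence "r b = r b'" by simp
    hence "b = b'" using ab(2,6) assms(2) unfolding bisection_def by (meson inj_onD)
    hence "a = a'" using ab assms(1) unfolding bisection_def by (metis inj_onD)
    thus "x = y" using ab \<open>b = b'\<close> by simp
  qed
qed

lemma setmul_ginv_image_compose:
  assumes "inj_on r E" "s ` D \<subseteq> s ` E"
  shows "setmul G (setmul G D (gi ` E)) (setmul G E (gi ` F)) = setmul G D (gi ` F)"
proof (intro equalityI subsetI)
  fix x assume "x \<in> setmul G (setmul G D (gi ` E)) (setmul G E (gi ` F))"
  then obtain y z where "y \<in> setmul G D (gi ` E)" "z \<in> setmul G E (gi ` F)" "s y = r z" "x = y \<cdot> z"
    unfolding setmul_def[of G "setmul G D (gi ` E)"] by blast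
  then obtain a b b' c where abc: "a \<in> D" "b \<in> E" "b' \<in> E" "c \<in> F" "s a = s b" "s b' = s c"
    "s (a \<cdot> gi b) = r (b' \<cdot> gi c)" "x = a \<cdot> gi b \<cdot> (b' \<cdot> gi c)"
    unfolding mem_setmul_ginv_image by blast
  hence "b = b'" using assms(1) by (simp add: inj_on_eq_iff)
  hence "x = a \<cdot> gi c" "s a = s c" using abc by (simp_all add: mul_assoc)
  thus "x \<in> setmul G D (gi ` F)" unfolding mem_setmul_ginv_image using abc by blast
next
  fix x assume "x \<in> setmul G D (gi ` F)"
  then obtain a c where ac: "a \<in> D" "c \<in> F" "s a = s c" "x = a \<cdot> gi c"
    unfolding mem_setmul_ginv_image by blast
  obtain b where b: "b \<in> E" "s b = s a" using assms(2) ac(1) by (metis imageE image_eqI subsetD)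
  have "x = a \<cdot> gi b \<cdot> (b \<cdot> gi c)" using ac b by (simp add: mul_assoc)
  moreover have "a \<cdot> gi b \<in> setmul G D (gi ` E)" "b \<cdot> gi c \<in> setmul G E (gi ` F)"
    unfolding mem_setmul_ginv_image using ac b by (metis, metis)
  moreover have "s (a \<cdot> gi b) = r (b \<cdot> gi c)" using ac b by simp
  ultimately show "x \<in> setmul G (setmul G D (gi ` E)) (setmul G E (gi ` F))"
    using setmul_memI by metis
qed

lemma setmul_ginv_image_self:
  assumes "inj_on s D"
  shows "setmul G D (gi ` D) = r ` D"
proof (intro equalityI subsetI)
  fix x assume "x \<in> setmul G D (gi ` D)"
  then obtain a b where ab: "a \<in> D" "b \<in> D" "s a = s b" "x = a \<cdot> gi b"
    unfolding mem_setmul_ginv_image by blast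
  hence "a = b" using assms by (simp add: inj_on_eq_iff)
  thus "x \<in> r ` D" using ab by simp
next
  fix x assume "x \<in> r ` D"
  then obtain a where "a \<in> D" "x = a \<cdot> gi a" by auto
  thus "x \<in> setmul G D (gi ` D)" unfolding mem_setmul_ginv_image by blast
qed

lemma multisection_of_bisections:
  assumes "finite I" "\<forall>i\<in>I. bisection G (D i)" "\<forall>i\<in>I. s ` D i = W"
    and "\<forall>i\<in>I. \<forall>j\<in>I. i \<noteq> j \<longrightarrow> r ` D i \<inter> r ` D j = {}"
  shows "multisection G I (\<lambda>i j. setmul G (D i) (gi ` D j))"
proof -
  have "setmul G (setmul G (D i) (gi ` D j)) (setmul G (D j) (gi ` D k)) =
      setmul G (D i) (gi ` D k)" if "i \<in> I" "j \<in> I" "k \<in> I" for i j k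
    using assms(2,3) that unfolding bisection_def by (intro setmul_ginv_image_compose) auto
  moreover have "setmul G (D i) (gi ` D i) = r ` D i" if "i \<in> I" for i
    using assms(2) that unfolding bisection_def by (intro setmul_ginv_image_self) auto
  ultimately show ?thesis
    using assms bisection_setmul_ginv_image unfolding multisection_def by auto
qed

lemma setmul_units_right:
  assumes "W \<subseteq> units G" "s ` D \<subseteq> W"
  shows "setmul G D (gi ` W) = D"
proof -
  have "gi ` W = W" using assms(1) ginv_unit by (force simp: image_iff)
  moreover have "setmul G D W = D"
  proof (intro equalityI subsetI)
    fix x assume "x \<in> setmul G D W"
    then obtain d w where "d \<in> D" "w \<in> W" "s d = r w" "x = d \<cdot> w" unfolding setmul_def by blast
    thus "x \<in> D" using assms(1) rng_unit by (metis mul_src_right subsetD)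
  next
    fix x assume "x \<in> D"
    moreover have "s x \<in> W" using assms(2) \<open>x \<in> D\<close> by blast
    ultimately show "x \<in> setmul G D W" using setmul_memI[of x D "s x" W] by simp
  qed
  ultimately show ?thesis by simp
qed

text \<open>Cutting the bisections B i down to the arrows with source in W and pairing them as
  D i (D j)\<inverse> gives a tower whose i0-th column is the union of the cut-down bisections.\<close>
lemma tower_of_bisections:
  assumes B: "\<forall>i<n. compact (B i) \<and> open (B i) \<and> bisection G (B i)"
    and "i0 < n" "B i0 \<subseteq> units G"
    and disj: "\<forall>i<n. \<forall>j<n. i \<noteq> j \<longrightarrow> r ` B i \<inter> r ` B j = {}"
    and W: "compact W" "open W" "W \<subseteq> (\<Inter>i<n. s ` B i)"
  shows "\<exists>C. tower G W n C i0 \<and> (\<Union>i<n. C i i0) = (\<Union>i<n. B i) \<inter> s -` W"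
proof -
  define D where "D i = B i \<inter> s -` W" for i
  define C where "C i j = setmul G (D i) (gi ` D j)" for i j
  have sD: "s ` D i = W" if "i < n" for i unfolding D_def using W(3) that by blast
  have D0: "D i0 = W" unfolding D_def using assms(2,3) W(3) src_unit by force
  have "compact (D i) \<and> open (D i)" if "i < n" for i
    unfolding D_def using B that W closed_vimage_src[OF compact_imp_closed] open_vimage_src
    by (simp add: compact_Int_closed open_Int)
  moreover have "multisection G {..<n} C"
    unfolding C_def
  proof (rule multisection_of_bisections)
    show "\<forall>i\<in>{..<n}. bisection G (D i)"
      using B unfolding D_def bisection_def by (auto intro: inj_on_subset)
    show "\<forall>i\<in>{..<n}. \<forall>j\<in>{..<n}. i \<noteq> j \<longrightarrow> r ` D i \<inter> r ` D j = {}"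
      using disj unfolding D_def by blast
  qed (use sD in auto)
  ultimately have "compact_open_multisection G {..<n} C"
    unfolding compact_open_multisection_def C_def
    using compact_setmul compact_ginv_image open_setmul open_ginv_image by auto
  moreover have Ci0: "C i i0 = D i" if "i < n" for i
  proof -
    have "W \<subseteq> units G" using sD[OF assms(2)] by auto
    thus ?thesis unfolding C_def D0 by (rule setmul_units_right) (simp add: sD that)
  qed
  moreover have "C i i0 \<inter> C j i0 = {}" if "i < n" "j < n" "i \<noteq> j" for i j
    using Ci0 disj that unfolding D_def by blast
  ultimately have "tower G W n C i0"
    unfolding tower_def using assms(2) D0 sD by auto
  moreover have "(\<Union>i<n. C i i0) = (\<Union>i<n. B i) \<inter> s -` W" using Ci0 unfolding D_def by auto
  ultimately show ?thesis by blast
qed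

lemma disjoint_range_bisections:
  fixes x :: "nat \<Rightarrow> 'g"
  assumes "\<forall>i<n. \<forall>j<n. i \<noteq> j \<longrightarrow> r (x i) \<noteq> r (x j)" "\<And>i. i < n \<Longrightarrow> open (U i) \<and> x i \<in> U i"
  shows "\<exists>B. \<forall>i<n. compact (B i) \<and> open (B i) \<and> bisection G (B i) \<and> x i \<in> B i \<and> B i \<subseteq> U i \<and>
    (\<forall>j<n. j \<noteq> i \<longrightarrow> r ` B i \<inter> r ` B j = {})"
proof -
  from finite_points_separated[of n "\<lambda>i. r (x i)", OF assms(1)] obtain N
    where N: "\<And>i. i < n \<Longrightarrow> open (N i) \<and> r (x i) \<in> N i \<and> (\<forall>j<n. j \<noteq> i \<longrightarrow> N i \<inter> N j = {})"
    by blast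
  have opn: "open (r -` N i \<inter> U i)" and mem: "x i \<in> r -` N i \<inter> U i" if "i < n" for i
    using N[OF that] assms(2)[OF that] open_vimage_rng by auto
  have "\<exists>B. compact B \<and> open B \<and> bisection G B \<and> x i \<in> B \<and> B \<subseteq> r -` N i \<inter> U i"
    if "i < n" for i
    using ample[OF opn[OF that] mem[OF that]] by blast
  then obtain B where B: "\<And>i. i < n \<Longrightarrow> compact (B i) \<and> open (B i) \<and> bisection G (B i) \<and>
      x i \<in> B i \<and> B i \<subseteq> r -` N i \<inter> U i"
    by metis
  have ranges: "\<forall>j<n. j \<noteq> i \<longrightarrow> r ` B i \<inter> r ` B j = {}" if "i < n" for i
  proof (intro allI impI)
    fix j assume "j < n" "j \<noteq> i"
    have "r ` B i \<subseteq> N i" "r ` B j \<subseteq> N j" using B[OF \<open>i < n\<close>] B[OF \<open>j < n\<close>] by auto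
    moreover have "N i \<inter> N j = {}" using N[OF \<open>i < n\<close>] \<open>j < n\<close> \<open>j \<noteq> i\<close> by auto
    ultimately show "r ` B i \<inter> r ` B j = {}" by blast
  qed
  show ?thesis
  proof (intro exI[of _ B] allI impI)
    fix i assume "i < n"
    with B[OF this] ranges[OF this]
    show "compact (B i) \<and> open (B i) \<and> bisection G (B i) \<and> x i \<in> B i \<and> B i \<subseteq> U i \<and>
        (\<forall>j<n. j \<noteq> i \<longrightarrow> r ` B i \<inter> r ` B j = {})" by blast
  qed
qed

text \<open>Arrows of F have distinct ranges because G is principal; the bisection around u is
  chosen inside the open set of units.\<close>
lemma separating_bisections:
  assumes "principal G" "finite F" "F \<subseteq> {g. s g = u}" "u \<in> F" "u \<in> units G"
  shows "\<exists>B i0. i0 < card F \<and> B i0 \<subseteq> units G \<and>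
    (\<forall>i<card F. compact (B i) \<and> open (B i) \<and> bisection G (B i) \<and> u \<in> s ` B i) \<and>
    (\<forall>i<card F. \<forall>j<card F. i \<noteq> j \<longrightarrow> r ` B i \<inter> r ` B j = {}) \<and>
    fibre G (\<Union>i<card F. B i) u = F"
proof -
  define n where "n = card F"
  obtain f where f: "bij_betw f {..<n} F"
    using ex_bij_betw_nat_finite[OF assms(2)] unfolding n_def by (metis atLeast0LessThan)
  obtain i0 where i0: "i0 < n" "f i0 = u" using f assms(4) unfolding bij_betw_def by auto
  have sf: "s (f i) = u" if "i < n" for i using f assms(3) that by (auto dest: bij_betwE)
  have "inj_on r F" using principal_rng_inj_on_fibre[OF assms(1)] assms(3) by (rule inj_on_subset)
  hence "inj_on (r \<circ> f) {..<n}"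
    using bij_betw_imp_inj_on[OF f] bij_betw_imp_surj_on[OF f] by (simp add: comp_inj_on)
  hence distinct: "\<forall>i<n. \<forall>j<n. i \<noteq> j \<longrightarrow> r (f i) \<noteq> r (f j)" unfolding inj_on_def by auto
  have "open (if i = i0 then units G else UNIV) \<and> f i \<in> (if i = i0 then units G else UNIV)"
    for i using open_units i0 assms(5) by simp
  from disjoint_range_bisections[OF distinct this] obtain B
    where B: "\<forall>i<n. compact (B i) \<and> open (B i) \<and> bisection G (B i) \<and> f i \<in> B i \<and>
      B i \<subseteq> (if i = i0 then units G else UNIV) \<and> (\<forall>j<n. j \<noteq> i \<longrightarrow> r ` B i \<inter> r ` B j = {})"
    by blast
  have "fibre G (\<Union>i<n. B i) u = F"
  proof (intro equalityI subsetI)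
    fix x assume "x \<in> fibre G (\<Union>i<n. B i) u"
    then obtain i where i: "i < n" "x \<in> B i" "s x = u" unfolding fibre_def by auto
    moreover have "inj_on s (B i)" "f i \<in> B i" using B i(1) unfolding bisection_def by auto
    ultimately have "x = f i" using sf[OF i(1)] by (metis inj_onD)
    thus "x \<in> F" using f i(1) by (auto dest: bij_betwE)
  next
    fix x assume "x \<in> F"
    then obtain i where "i < n" "x = f i" using f unfolding bij_betw_def by auto
    thus "x \<in> fibre G (\<Union>i<n. B i) u" unfolding fibre_def using B sf by auto
  qed
  moreover have "u \<in> s ` B i" if "i < n" for i using B that sf[OF that] by blast
  moreover have "B i0 \<subseteq> units G" using B i0(1) by (metis (full_types))
  ultimately have "i0 < n \<and> B i0 \<subseteq> units G \<and>
    (\<forall>i<n. compact (B i) \<and> open (B i) \<and> bisection G (B i) \<and> u \<in> s ` B i) \<and>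
    (\<forall>i<n. \<forall>j<n. i \<noteq> j \<longrightarrow> r ` B i \<inter> r ` B j = {}) \<and> fibre G (\<Union>i<n. B i) u = F"
    using B i0(1) by blast
  thus ?thesis unfolding n_def by blast
qed

lemma card_fibre_UN_ge:
  assumes "finite (fibre G (\<Union>i<n. B i) v)" "\<forall>i<n. v \<in> s ` B i"
    and "\<forall>i<n. \<forall>j<n. i \<noteq> j \<longrightarrow> B i \<inter> B j = {}"
  shows "n \<le> card (fibre G (\<Union>i<n. B i) v)"
proof -
  have "\<forall>i\<in>{..<n}. \<exists>x. x \<in> B i \<and> s x = v" using assms(2) by blast
  then obtain b where b: "\<forall>i\<in>{..<n}. b i \<in> B i \<and> s (b i) = v" by metis
  have "inj_on b {..<n}"
  proof (rule inj_onI)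
    fix i j assume ij: "i \<in> {..<n}" "j \<in> {..<n}" "b i = b j"
    show "i = j"
    proof (rule ccontr)
      assume "i \<noteq> j"
      hence "B i \<inter> B j = {}" using assms(3) ij(1,2) by blast
      moreover have "b i \<in> B i" "b j \<in> B j" using b ij(1,2) by simp_all
      ultimately show False using ij(3) by (metis disjoint_iff)
    qed
  qed
  moreover have "b ` {..<n} \<subseteq> fibre G (\<Union>i<n. B i) v" unfolding fibre_def using b by blast
  ultimately have "card {..<n} \<le> card (fibre G (\<Union>i<n. B i) v)"
    using assms(1) by (rule card_inj_on_le)
  thus ?thesis by simp
qed

lemma foelner_fibre_of_card_bounds:
  assumes "compact K" "compact B" "0 \<le> eps" "0 < n" "n \<le> card (fibre G B v)"
    and "real (card (fibre G (setmul G K B - B) v)) \<le> eps * real n"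
  shows "foelner G K eps (fibre G B v)"
proof -
  have "eps * real n \<le> eps * real (card (fibre G B v))"
    using assms(3,5) by (simp add: mult_left_mono)
  hence "real (card (fibre G (setmul G K B - B) v)) \<le> eps * real (card (fibre G B v))"
    using assms(6) by linarith
  moreover have "fibre G (setmul G K B - B) v \<subseteq> fibre G (setmul G K B) v"
    unfolding fibre_def by blast
  hence "finite (fibre G (setmul G K B - B) v)"
    using finite_fibre[OF compact_setmul[OF assms(1,2)]] by (rule finite_subset)
  moreover have "fibre G B v \<noteq> {}" using assms(4,5) by auto
  ultimately show ?thesis using finite_fibre[OF assms(2)]
    unfolding foelner_def fibre_setmul_diff[symmetric] by simp
qed

text \<open>The F{\o}lner set F is the fibre over u of a union of separated bisections; near u the
  fibres of this union still have at least |F| points, while by upper semicontinuity their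
  K-boundaries have at most as many points as the K-boundary of F.\<close>
lemma foelner_towers_near_unit:
  assumes "principal G" "compact K" "u \<in> units G"
    and F: "F \<subseteq> {g. s g = u}" "u \<in> F" "foelner G K eps F"
  shows "\<exists>V. open V \<and> u \<in> V \<and> (\<forall>W. compact W \<and> open W \<and> W \<subseteq> V \<longrightarrow> foelner_tower G K eps W)"
proof -
  define n where "n = card F"
  have "finite F" using F(3) unfolding foelner_def by blast
  then obtain B i0 where B: "i0 < n" "B i0 \<subseteq> units G"
    "\<forall>i<n. compact (B i) \<and> open (B i) \<and> bisection G (B i) \<and> u \<in> s ` B i"
    "\<forall>i<n. \<forall>j<n. i \<noteq> j \<longrightarrow> r ` B i \<inter> r ` B j = {}" "fibre G (\<Union>i<n. B i) u = F"
    using separating_bisections[OF assms(1) _ F(1,2) assms(3)] unfolding n_def by blast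
  have Bdisj: "\<forall>i<n. \<forall>j<n. i \<noteq> j \<longrightarrow> B i \<inter> B j = {}"
    using B(4) by (metis disjoint_iff imageI)
  define BB where "BB = (\<Union>i<n. B i)"
  have BB: "compact BB" "open BB" unfolding BB_def using B(3) by auto
  define T where "T = setmul G K BB - BB"
  have "compact T" unfolding T_def using compact_setmul[OF assms(2) BB(1)] BB(2) by (rule compact_diff)
  then obtain Vu where Vu: "open Vu" "u \<in> Vu" "\<forall>v\<in>Vu. card (fibre G T v) \<le> card (fibre G T u)"
    using card_fibre_upper_semicontinuous by blast
  have Tu: "real (card (fibre G T u)) \<le> eps * real n"
    using F(3) B(5) unfolding T_def fibre_setmul_diff BB_def foelner_def n_def by simp
  define V where "V = Vu \<inter> (\<Inter>i<n. s ` B i)"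
  show ?thesis
  proof (intro exI[of _ V] conjI allI impI)
    show "open V" unfolding V_def using Vu(1) B(3) open_src_image by (intro open_Int open_INT) auto
    show "u \<in> V" unfolding V_def using Vu(2) B(3) by auto
    fix W assume "compact W \<and> open W \<and> W \<subseteq> V"
    hence W: "compact W" "open W" "W \<subseteq> (\<Inter>i<n. s ` B i)" "W \<subseteq> Vu" unfolding V_def by auto
    obtain C where C: "tower G W n C i0" "(\<Union>i<n. C i i0) = BB \<inter> s -` W"
      using tower_of_bisections[OF _ B(1,2,4) W(1-3)] B(3) unfolding BB_def by blast
    have "0 < n" using B(1) by simp
    hence "0 \<le> eps" using Tu by (smt (verit) mult_neg_pos of_nat_0_le_iff of_nat_0_less_iff)
    have foelner_BB: "foelner G K eps (fibre G BB v)" if "v \<in> W" for v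
    proof (rule foelner_fibre_of_card_bounds[OF assms(2) BB(1) \<open>0 \<le> eps\<close> \<open>0 < n\<close>])
      show "n \<le> card (fibre G BB v)" unfolding BB_def
        using finite_fibre[OF BB(1)] W(3) that Bdisj by (intro card_fibre_UN_ge) (auto simp: BB_def)
      have "card (fibre G T v) \<le> card (fibre G T u)" using Vu(3) W(4) that by blast
      thus "real (card (fibre G (setmul G K BB - BB) v)) \<le> eps * real n"
        using Tu unfolding T_def by linarith
    qed
    have "fibre G (\<Union>i<n. C i i0) v = fibre G BB v" if "v \<in> W" for v
      using C(2) that unfolding fibre_def by auto
    hence "\<forall>v\<in>W. foelner G K eps (fibre G (\<Union>i<n. C i i0) v)" using foelner_BB by simp
    thus "foelner_tower G K eps W" unfolding foelner_tower_def using C(1) by blast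
  qed
qed

end

lemma normal_foelner_set_of_towers:
  fixes G :: "('g::topological_space) groupoid_ops" and m :: nat
  assumes cover: "(\<Union>l<m. W l) = units G" and disj: "\<forall>l l'. l \<noteq> l' \<longrightarrow> W l \<inter> W l' = {}"
    and towers: "\<forall>l<m. foelner_tower G K eps (W l)"
  shows "\<exists>S. normal_foelner_set G K eps S"
proof -
  obtain n C i0 where T: "\<And>l. l < m \<Longrightarrow> tower G (W l) (n l) (C l) (i0 l) \<and>
      (\<forall>v\<in>W l. foelner G K eps (fibre G (\<Union>i<n l. C l i (i0 l)) v))"
    using towers unfolding foelner_tower_def by metis
  have ms: "compact_open_multisection G {..<n l} (C l)" "i0 l < n l" "C l (i0 l) (i0 l) = W l"
    "\<forall>i<n l. src G ` C l i (i0 l) \<subseteq> W l"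
    "\<forall>i<n l. \<forall>j<n l. i \<noteq> j \<longrightarrow> C l i (i0 l) \<inter> C l j (i0 l) = {}" if "l < m" for l
    using T[OF that] unfolding tower_def by auto
  have co: "compact (C l i (i0 l)) \<and> open (C l i (i0 l))" if "l < m" "i < n l" for l i
    using ms[OF that(1)] that(2) unfolding compact_open_multisection_def by auto
  define S where "S = (\<Union>l<m. \<Union>i\<in>{..<n l}. C l i (i0 l))"
  have disj_cells: "C l i (i0 l) \<inter> C l' i' (i0 l') = {}"
    if "l < m" "l' < m" "i < n l" "i' < n l'" "(l, i) \<noteq> (l', i')" for l l' i i'
  proof (cases "l = l'")
    case True
    thus ?thesis using ms(5)[OF that(1)] that by auto
  next
    case False
    have "src G ` C l i (i0 l) \<subseteq> W l" "src G ` C l' i' (i0 l') \<subseteq> W l'"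
      using ms(4)[OF that(1)] ms(4)[OF that(2)] that(3,4) by simp_all
    moreover have "W l \<inter> W l' = {}" using disj False by simp
    ultimately show ?thesis by blast
  qed
  have "normal_set G S"
    unfolding normal_set_def
  proof (intro conjI exI[of _ m] exI[of _ "\<lambda>l. {..<n l}"] exI[of _ C] exI[of _ i0])
    show "compact S" unfolding S_def using co by (intro compact_UN) auto
    show "open S" unfolding S_def using co by (intro open_UN) auto
    show "\<forall>l<m. compact_open_multisection G {..<n l} (C l) \<and> i0 l \<in> {..<n l}" using ms by simp
    show "S = (\<Union>l<m. \<Union>i\<in>{..<n l}. C l i (i0 l))" by (rule S_def)
    show "\<forall>l<m. \<forall>l'<m. \<forall>i\<in>{..<n l}. \<forall>i'\<in>{..<n l'}. (l, i) \<noteq> (l', i') \<longrightarrow>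
        C l i (i0 l) \<inter> C l' i' (i0 l') = {}" using disj_cells by simp
    show "units G = (\<Union>l<m. C l (i0 l) (i0 l))" using ms(3) cover by simp
    show "\<forall>l<m. \<forall>l'<m. l \<noteq> l' \<longrightarrow> C l (i0 l) (i0 l) \<inter> C l' (i0 l') (i0 l') = {}"
      using ms(3) disj by simp
  qed
  moreover have "foelner G K eps (fibre G S u)" if "u \<in> units G" for u
  proof -
    have "u \<in> (\<Union>l<m. W l)" using cover that by simp
    then obtain l where l: "l < m" "u \<in> W l" by blast
    have "fibre G S u = fibre G (\<Union>i<n l. C l i (i0 l)) u"
    proof (intro equalityI subsetI)
      fix x assume "x \<in> fibre G S u"
      then obtain l' i where x: "l' < m" "i < n l'" "x \<in> C l' i (i0 l')" "src G x = u"
        unfolding S_def fibre_def by auto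
      hence "u \<in> W l'" using ms(4)[OF x(1)] by blast
      hence "l' = l" using disj l(2) by blast
      thus "x \<in> fibre G (\<Union>i<n l. C l i (i0 l)) u" using x unfolding fibre_def by auto
    qed (use l(1) in \<open>auto simp: S_def fibre_def\<close>)
    thus ?thesis using T[OF l(1)] l(2) by simp
  qed
  ultimately show ?thesis unfolding normal_foelner_set_def by blast
qed

theorem mainTheorem9:
  fixes G :: "('g::t2_space) groupoid_ops"
  assumes "standing_groupoid G"
    and "principal G"
    and "ubiquitously_fiberwise_amenable G"
  shows "\<forall>K eps. compact K \<longrightarrow> eps > 0 \<longrightarrow> (\<exists>S. normal_foelner_set G K eps S)"
proof (intro allI impI)
  fix K :: "'g set" and eps :: real
  assume K: "compact K" and eps: "eps > 0"
  interpret ample_groupoid G by unfold_locales (rule assms(1))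
  have basis: "\<exists>B. compact B \<and> open B \<and> u \<in> B \<and> B \<subseteq> V" if "open V" "u \<in> V" for u :: 'g and V
    using ample[OF that] by blast
  have towers: "\<exists>V. open V \<and> u \<in> V \<and> (\<forall>W. compact W \<and> open W \<and> W \<subseteq> V \<longrightarrow> foelner_tower G K eps W)"
    if u: "u \<in> units G" for u
  proof -
    obtain F where "F \<subseteq> {g. src G g = u}" "u \<in> F" "foelner G K eps F"
      using exists_foelner_containing_unit[OF assms(3) K eps u] by blast
    thus ?thesis by (rule foelner_towers_near_unit[OF assms(2) K u])
  qed
  obtain m :: nat and W where W: "\<forall>l<m. compact (W l) \<and> open (W l) \<and> foelner_tower G K eps (W l)"
      "(\<Union>l<m. W l) = units G" "\<forall>l l'. l \<noteq> l' \<longrightarrow> W l \<inter> W l' = {}"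
    using compact_open_partition[OF compact_units open_units basis towers] by blast
  have "\<forall>l<m. foelner_tower G K eps (W l)" using W(1) by simp
  thus "\<exists>S. normal_foelner_set G K eps S" by (rule normal_foelner_set_of_towers[OF W(2,3)])
qed

end
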